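(* Let $\alpha\in\Bbbk$, $f=z(z+\alpha)$, $A=A(f)$. Every degree-$0$ automorphism of the $\mathbb{Z}$-algebra $\overline{A}$ is inner.
   Context: $\Bbbk$ algebraically closed of characteristic $0$; $A=A(f)$ is generated by $\Bbbk[z],x,y$ with $xz=(z+1)x$, $yz=(z-1)y$, $xy=f$, $yx=f(z-1)$, graded by $\deg x=1,\deg y=-1,\deg z=0$. The $\mathbb{Z}$-algebra associated to $A$ is $\overline{A}=\bigoplus_{i,j\in\mathbb{Z}}\overline{A}_{i,j}$ with $\overline{A}_{i,j}=A_{j-i}$, with multiplication $\overline{A}_{i,j}\times\overline{A}_{j,k}\to\overline{A}_{i,k}$ induced by multiplication in $A$ and $\overline{A}_{i,j}\overline{A}_{j',k}=0$ for $j\neq j'$; $1_i\in\overline{A}_{i,i}=A_0$ denotes the unit. A degree-$0$ automorphism is a $\Bbbk$-algebra automorphism $\gamma$ of $\overline{A}$ with $\gamma(\overline{A}_{i,j})=\overline{A}_{i,j}$ and $\gamma(1_i)=1_i$ for all $i,j$. Such $\gamma$ is inner if for all $m,n\in\mathbb{Z}$ there exist $g_m\in\overline{A}_{m,m}$ and $h_n\in\overline{A}_{n,n}$ with $\gamma(w)=g_mwh_n$ for all $w\in\overline{A}_{m,n}$. *)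

theory Defs
  imports "HOL-Computational_Algebra.Polynomial"
begin

text \<open>Generalized Weyl algebra A(f) over k[z]: the homogeneous component A_d is a free
left k[z]-module with basis x^d (d \<ge> 0) resp. y^(-d) (d < 0).  An element a(z) x^d
(convention x^(-k) = y^k) is represented by its coefficient polynomial a.\<close>

text \<open>The automorphism sigma^n of k[z]: b(z) \<mapsto> b(z+n); one has x b = sigma(b) x, y b = sigma^(-1)(b) y.\<close>
definition sh :: "int \<Rightarrow> 'k::comm_ring_1 poly \<Rightarrow> 'k poly" where
  "sh n p = pcompose p [:of_int n, 1:]"

text \<open>xx f d e is the polynomial c with x^d x^e = c x^(d+e) in A(f).\<close>
definition xx :: "'k::comm_ring_1 poly \<Rightarrow> int \<Rightarrow> int \<Rightarrow> 'k poly" where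
  "xx f d e =
     (if d > 0 \<and> e < 0 then
        (let t = min d (- e) in sh (d - t) (\<Prod>i<nat t. sh (int i) f))
      else if d < 0 \<and> e > 0 then
        (let t = min (- d) e in sh (d + t) (\<Prod>i\<in>{1..nat t}. sh (- int i) f))
      else 1)"

text \<open>Multiplication A_d \<times> A_e \<rightarrow> A_(d+e): (a x^d)(b x^e) = a sigma^d(b) (x^d x^e).\<close>
definition gwa_mul :: "'k::comm_ring_1 poly \<Rightarrow> int \<Rightarrow> int \<Rightarrow> 'k poly \<Rightarrow> 'k poly \<Rightarrow> 'k poly" where
  "gwa_mul f d e a b = a * sh d b * xx f d e"

definition gwa_f :: "'k::comm_ring_1 \<Rightarrow> 'k poly" where
  "gwa_f \<alpha> = [:0, 1:] * [:\<alpha>, 1:]"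

text \<open>A degree-0 automorphism of the Z-algebra Abar, given by its components
gamma i j : Abar_(i,j) = A_(j-i) \<rightarrow> Abar_(i,j).\<close>
definition degree_zero_aut :: "'k::field poly \<Rightarrow> (int \<Rightarrow> int \<Rightarrow> 'k poly \<Rightarrow> 'k poly) \<Rightarrow> bool" where
  "degree_zero_aut f \<gamma> \<longleftrightarrow>
     (\<forall>i j. bij (\<gamma> i j)) \<and>
     (\<forall>i j a b. \<gamma> i j (a + b) = \<gamma> i j a + \<gamma> i j b) \<and>
     (\<forall>i j c a. \<gamma> i j (smult c a) = smult c (\<gamma> i j a)) \<and>
     (\<forall>i j k a b. \<gamma> i k (gwa_mul f (j - i) (k - j) a b)
                   = gwa_mul f (j - i) (k - j) (\<gamma> i j a) (\<gamma> j k b)) \<and>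
     (\<forall>i. \<gamma> i i 1 = 1)"

definition inner_aut :: "'k::field poly \<Rightarrow> (int \<Rightarrow> int \<Rightarrow> 'k poly \<Rightarrow> 'k poly) \<Rightarrow> bool" where
  "inner_aut f \<gamma> \<longleftrightarrow>
     (\<exists>g h :: int \<Rightarrow> 'k poly. \<forall>m n w.
        \<gamma> m n w = gwa_mul f (n - m) 0 (gwa_mul f 0 (n - m) (g m) w) (h n))"

end

theory Submission
  imports Defs
begin

text \<open>The diagonal components \<gamma>_ii are k-algebra automorphisms of k[z], hence substitutions
z \<mapsto> p.  Since \<gamma>_{i,i+1}(1) and \<gamma>_{i+1,i}(1) are units, i.e. nonzero constants, \<gamma>_ii fixes
xy = f and yx = f(z-1) up to scalars; for f = z(z+\<alpha>) this forces p = z.  So every \<gamma>_ij is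
multiplication by a constant c_ij, and comparing \<gamma> on products gives the cocycle rule
c_ik = c_ij c_jk, whence \<gamma>(w) = c_m0 w c_0n on A_mn.\<close>

lemma sh_0 [simp]: "sh 0 p = p"
  by (simp add: sh_def)

lemma sh_const [simp]: "sh n [:c:] = [:c:]"
  by (simp add: sh_def)

lemma sh_eq_0_iff [simp]: "sh n p = 0 \<longleftrightarrow> p = (0 :: 'k::field poly)"
  by (simp add: sh_def pcompose_eq_0_iff)

lemma sh_1 [simp]: "sh n 1 = 1"
  by (simp add: sh_def pcompose_1)

lemma xx_nonzero: "(f :: 'k::field poly) \<noteq> 0 \<Longrightarrow> xx f d e \<noteq> 0"
  by (auto simp: xx_def Let_def prod_zero_iff)

lemma xx_0_left [simp]: "xx f 0 e = 1"
  and xx_0_right [simp]: "xx f d 0 = 1"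
  by (simp_all add: xx_def)

lemma xx_1_minus_1: "xx f 1 (-1) = f"
  by (simp add: xx_def)

lemma xx_minus_1_1: "xx f (-1) 1 = sh (-1) f"
  by (simp add: xx_def)

lemma gwa_mul_0 [simp]: "gwa_mul f 0 e a b = a * b"
  by (simp add: gwa_mul_def)

lemma gwa_mul_0_right [simp]: "gwa_mul f d 0 a b = a * sh d b"
  by (simp add: gwa_mul_def)

lemma gwa_f_nonzero: "gwa_f \<alpha> \<noteq> 0"
  by (simp add: gwa_f_def)

lemma sh_minus_1_gwa_f: "sh (-1) (gwa_f (\<alpha>::'k::field)) = [:-1, 1:] * [:\<alpha> - 1, 1:]"
  by (simp add: sh_def gwa_f_def pcompose_mult pcompose_pCons algebra_simps)

lemma pcompose_rescaling_gwa_f_eq_z: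
  fixes p :: "'k::field_char_0 poly"
  assumes f: "pcompose (gwa_f \<alpha>) p = smult c (gwa_f \<alpha>)" and "c \<noteq> 0"
    and sh_f: "pcompose (sh (-1) (gwa_f \<alpha>)) p = smult d (sh (-1) (gwa_f \<alpha>))"
  shows "p = [:0, 1:]"
proof -
  have "degree (gwa_f \<alpha>) = 2" by (simp add: gwa_f_def)
  then have "2 * degree p = 2"
    using arg_cong[OF f, of degree] \<open>c \<noteq> 0\<close> by (simp add: degree_pcompose)
  then have "degree p = 1" by simp
  then obtain a b where p: "p = [:b, a:]" and "a \<noteq> 0"
    by (cases p) (auto split: if_splits elim!: degree_eq_zeroE)
  have "coeff (pcompose (gwa_f \<alpha>) p) 2 = coeff (smult c (gwa_f \<alpha>)) 2"
       "coeff (pcompose (gwa_f \<alpha>) p) 1 = coeff (smult c (gwa_f \<alpha>)) 1"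
       "coeff (pcompose (sh (-1) (gwa_f \<alpha>)) p) 2 = coeff (smult d (sh (-1) (gwa_f \<alpha>))) 2"
       "coeff (pcompose (sh (-1) (gwa_f \<alpha>)) p) 1 = coeff (smult d (sh (-1) (gwa_f \<alpha>))) 1"
    using f sh_f by simp_all
  then have "a * a = c" "a * (2 * b + \<alpha>) = c * \<alpha>"
    "a * a = d" "a * (2 * b + \<alpha> - 2) = d * (\<alpha> - 2)"
    unfolding sh_minus_1_gwa_f p
    by (simp_all add: gwa_f_def pcompose_mult pcompose_pCons algebra_simps numeral_2_eq_2)
  with \<open>a \<noteq> 0\<close> have "2 * b + \<alpha> = a * \<alpha>" "2 * b + \<alpha> - 2 = a * (\<alpha> - 2)"
    by (metis mult.assoc mult_left_cancel)+
  then have "a = 1" "b = 0" by (simp_all add: algebra_simps)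
  with p show ?thesis by simp
qed

locale gwa_degree_zero_aut =
  fixes f :: "'k::field poly" and \<gamma> :: "int \<Rightarrow> int \<Rightarrow> 'k poly \<Rightarrow> 'k poly"
  assumes aut: "degree_zero_aut f \<gamma>"
begin

lemma bij: "bij (\<gamma> i j)"
  and add: "\<gamma> i j (a + b) = \<gamma> i j a + \<gamma> i j b"
  and smult: "\<gamma> i j (smult c a) = smult c (\<gamma> i j a)"
  and mul: "\<gamma> i k (gwa_mul f (j - i) (k - j) a b) = gwa_mul f (j - i) (k - j) (\<gamma> i j a) (\<gamma> j k b)"
  and one: "\<gamma> i i 1 = 1"
  using aut unfolding degree_zero_aut_def by blast+

lemma zero: "\<gamma> i j 0 = 0"
  using add[of i j 0 0] by (metis add.right_neutral add_left_cancel)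

lemma diag_mult: "\<gamma> i i (a * b) = \<gamma> i i a * \<gamma> i i b"
  using mul[of i i i a b] by simp

lemma eq_diag_mult_one: "\<gamma> i j a = \<gamma> i i a * \<gamma> i j 1"
  using mul[of i j i a 1] by simp

lemma one_eq_const: obtains c where "c \<noteq> 0" "\<gamma> i j 1 = [:c:]"
proof -
  obtain a where "\<gamma> i j a = 1"
    using bij[of i j] by (metis bij_is_surj surjD)
  then have unit: "\<gamma> i i a * \<gamma> i j 1 = 1"
    by (metis eq_diag_mult_one)
  then have "degree (\<gamma> i j 1) = 0"
    by (metis add_is_0 degree_1 degree_mult_eq mult_eq_0_iff one_neq_zero)
  with unit show ?thesis
    by (metis degree_eq_zeroE mult_zero_right pCons_0_0 that zero_neq_one)
qed

lemma diag_eq_pcompose: "\<gamma> i i q = pcompose q (\<gamma> i i [:0, 1:])"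
proof (induction q)
  case 0
  show ?case by (simp add: zero)
next
  case (pCons a q)
  have "pCons a q = smult a 1 + [:0, 1:] * q" by simp
  then have "\<gamma> i i (pCons a q) = smult a (\<gamma> i i 1) + \<gamma> i i [:0, 1:] * \<gamma> i i q"
    by (simp only: add smult diag_mult)
  with pCons.IH show ?case by (simp add: one pcompose_pCons)
qed

lemma diag_f_eq_smult: obtains c where "c \<noteq> 0" "\<gamma> i i f = smult c f"
proof -
  obtain c c' where "c \<noteq> 0" "\<gamma> i (i + 1) 1 = [:c:]" "c' \<noteq> 0" "\<gamma> (i + 1) i 1 = [:c':]"
    using one_eq_const by metis
  with mul[of i i "i + 1" 1 1] show ?thesis
    by (intro that[of "c * c'"]) (simp_all add: gwa_mul_def xx_1_minus_1 mult.commute)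
qed

lemma diag_sh_f_eq_smult: obtains c where "c \<noteq> 0" "\<gamma> i i (sh (-1) f) = smult c (sh (-1) f)"
proof -
  obtain c c' where "c \<noteq> 0" "\<gamma> i (i - 1) 1 = [:c:]" "c' \<noteq> 0" "\<gamma> (i - 1) i 1 = [:c':]"
    using one_eq_const by metis
  with mul[of i i "i - 1" 1 1] show ?thesis
    by (intro that[of "c * c'"]) (simp_all add: gwa_mul_def xx_minus_1_1 mult.commute)
qed

context
  assumes diag_z: "\<And>i. \<gamma> i i [:0, 1:] = [:0, 1:]"
begin

lemma eq_mult_one: "\<gamma> i j w = w * \<gamma> i j 1"
  using eq_diag_mult_one[of i j w] diag_eq_pcompose[of i w] diag_z by simp

lemma one_cocycle:
  assumes "f \<noteq> 0"
  shows "\<gamma> i k 1 = \<gamma> i j 1 * \<gamma> j k 1"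
proof -
  let ?x = "xx f (j - i) (k - j)"
  obtain c where c: "\<gamma> j k 1 = [:c:]" using one_eq_const by blast
  have "?x * \<gamma> i k 1 = \<gamma> i k ?x"
    by (rule eq_mult_one[symmetric])
  also have "\<dots> = ?x * (\<gamma> i j 1 * \<gamma> j k 1)"
    using mul[of i k j 1 1] c by (simp add: gwa_mul_def ac_simps)
  finally show ?thesis using xx_nonzero[OF assms] by simp
qed

lemma inner_autI:
  assumes "f \<noteq> 0"
  shows "inner_aut f \<gamma>"
  unfolding inner_aut_def
proof (intro exI allI)
  fix m n w
  obtain c where "\<gamma> 0 n 1 = [:c:]" using one_eq_const by blast
  then show "\<gamma> m n w = gwa_mul f (n - m) 0 (gwa_mul f 0 (n - m) (\<gamma> m 0 1) w) (\<gamma> 0 n 1)"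
    using eq_mult_one[of m n w] one_cocycle[OF assms, of m n 0] by (simp add: ac_simps)
qed

end

end

theorem lemma5p1:
  fixes \<alpha> :: "'k::field_char_0"
    and \<gamma> :: "int \<Rightarrow> int \<Rightarrow> 'k poly \<Rightarrow> 'k poly"
  assumes alg_closed: "\<forall>p :: 'k poly. degree p > 0 \<longrightarrow> (\<exists>c. poly p c = 0)"
    and aut: "degree_zero_aut (gwa_f \<alpha>) \<gamma>"
  shows "inner_aut (gwa_f \<alpha>) \<gamma>"
proof -
  interpret gwa_degree_zero_aut "gwa_f \<alpha>" \<gamma> by (rule gwa_degree_zero_aut.intro) (fact aut)
  have "\<gamma> i i [:0, 1:] = [:0, 1:]" for i
  proof -
    obtain c where "c \<noteq> 0" "\<gamma> i i (gwa_f \<alpha>) = smult c (gwa_f \<alpha>)"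
      by (rule diag_f_eq_smult)
    moreover obtain d where "\<gamma> i i (sh (-1) (gwa_f \<alpha>)) = smult d (sh (-1) (gwa_f \<alpha>))"
      by (rule diag_sh_f_eq_smult)
    ultimately show ?thesis
      by (intro pcompose_rescaling_gwa_f_eq_z[of \<alpha> _ c d]) (simp_all add: diag_eq_pcompose[symmetric])
  qed
  then show ?thesis using inner_autI gwa_f_nonzero by blast
qed

end
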